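(* Let $\varphi(s,v)=\vec c(s)+v\vec q(s)$ be a developable timelike ruled surface of type $M^1_-$ in $\mathbb{R}^3_1$, and let $R$ be a nonzero constant. A developable timelike ruled surface $\varphi^*$ of type $M^1_+$ or $M^1_-$ with striction curve $\vec c^*=\vec c+R\vec a$ is a Mannheim offset of $\varphi$ if and only if $$\frac{d\kappa}{ds}=-\frac{1}{R}\left(R^2\kappa^2\left(\frac{ds_1}{ds}\right)^2-1\right)-\frac{1}{ds_1/ds}\frac{d^2s_1}{ds^2}\kappa .$$
   Context: Work in Minkowski 3-space $\mathbb{R}^3_1$, i.e. $\mathbb{R}^3$ with $\langle x,y\rangle=-x_1y_1+x_2y_2+x_3y_3$, norm $\|x\|=\sqrt{|\langle x,x\rangle|}$, and Lorentzian cross product $x\times y=(x_2y_3-x_3y_2,\,x_1y_3-x_3y_1,\,x_2y_1-x_1y_2)$. A ruled surface is $\varphi(s,v)=\vec c(s)+v\vec q(s)$, where $\vec q$ is a unit non-null vector field with $\langle\vec q,\vec q\rangle=\varepsilon_2\in\{\pm1\}$, $d\vec q/ds$ is non-null, and the base curve $\vec c$ is the striction curve, i.e. $\langle d\vec q/ds,d\vec c/ds\rangle=0$; $s$ is the arc-length parameter of $\vec c$. Its Frenet frame is $\{\vec q,\vec h,\vec a\}$ with central normal $\vec h=\frac{d\vec q/ds}{\|d\vec q/ds\|}$ and asymptotic normal $\vec a=\frac{(d\vec q/ds)\times\vec q}{\|d\vec q/ds\|}$. The surface is of type $M^1_-$ if $\vec q$ is timelike and $\vec h$ spacelike; of type $M^1_+$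 if $\vec q$ and $\vec h$ are both spacelike (both timelike surfaces). Let $s_1$ be the arc-length parameter of the spherical image curve traced by $\vec q$, and $\kappa$ the conical curvature of the directing cone; for types $M^1_\pm$: $d\vec q/ds_1=\vec h$, $d\vec h/ds_1=-\varepsilon_2\vec q+\kappa\vec a$, $d\vec a/ds_1=\varepsilon_2\kappa\vec h$. A ruled surface is developable iff its distribution parameter $\det(d\vec c/ds,\vec q,d\vec q/ds)/\langle d\vec q/ds,d\vec q/ds\rangle$ vanishes identically. A ruled surface $\varphi^*(s,v)=\vec c^*(s)+v\vec q^*(s)$ with striction curve $\vec c^*$ and Frenet frame $\{\vec q^*,\vec h^*,\vec a^*\}$ is a Mannheim offset of the timelike ruled surface $\varphi$ if there is a one-to-one correspondence between their rulings such that $\vec h^*=\vec a$. *)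

theory Defs
  imports "HOL-Analysis.Analysis"
begin

definition mink :: "real^3 \<Rightarrow> real^3 \<Rightarrow> real" where
  "mink x y = - x$1 * y$1 + x$2 * y$2 + x$3 * y$3"

definition mnorm :: "real^3 \<Rightarrow> real" where
  "mnorm x = sqrt \<bar>mink x x\<bar>"

definition lcross :: "real^3 \<Rightarrow> real^3 \<Rightarrow> real^3" where
  "lcross x y = vector [x$2 * y$3 - x$3 * y$2, x$1 * y$3 - x$3 * y$1, x$2 * y$1 - x$1 * y$2]"

definition det3 :: "real^3 \<Rightarrow> real^3 \<Rightarrow> real^3 \<Rightarrow> real" where
  "det3 x y z = x$1 * (y$2 * z$3 - y$3 * z$2) - x$2 * (y$1 * z$3 - y$3 * z$1)
              + x$3 * (y$1 * z$2 - y$2 * z$1)"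

definition timelike :: "real^3 \<Rightarrow> bool" where
  "timelike x \<longleftrightarrow> mink x x < 0"

definition spacelike :: "real^3 \<Rightarrow> bool" where
  "spacelike x \<longleftrightarrow> mink x x > 0"

definition vd :: "(real \<Rightarrow> real^3) \<Rightarrow> real \<Rightarrow> real^3" where
  "vd f t = vector_derivative f (at t)"

definition central_normal :: "(real \<Rightarrow> real^3) \<Rightarrow> real \<Rightarrow> real^3" where
  "central_normal q t = (1 / mnorm (vd q t)) *\<^sub>R vd q t"

definition asym_normal :: "(real \<Rightarrow> real^3) \<Rightarrow> real \<Rightarrow> real^3" where
  "asym_normal q t = (1 / mnorm (vd q t)) *\<^sub>R lcross (vd q t) (q t)"

definition dist_param :: "(real \<Rightarrow> real^3) \<Rightarrow> (real \<Rightarrow> real^3) \<Rightarrow> real \<Rightarrow> real" where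
  "dist_param c q t = det3 (vd c t) (q t) (vd q t) / mink (vd q t) (vd q t)"

text \<open>phi(s,v) = c(s) + v q(s), s in I, is a ruled surface whose base curve c is its
  striction curve: c and q differentiable, c regular (non-null tangent, so that it admits an
  arc-length parametrisation), q a unit non-null vector field, dq/ds non-null, and
  <dq/ds, dc/ds> = 0.\<close>
definition ruled_surface_on :: "real set \<Rightarrow> (real \<Rightarrow> real^3) \<Rightarrow> (real \<Rightarrow> real^3) \<Rightarrow> bool" where
  "ruled_surface_on I c q \<longleftrightarrow>
     (\<forall>t\<in>I. c differentiable (at t) \<and> q differentiable (at t)
        \<and> mink (vd c t) (vd c t) \<noteq> 0
        \<and> \<bar>mink (q t) (q t)\<bar> = 1
        \<and> mink (vd q t) (vd q t) \<noteq> 0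
        \<and> mink (vd q t) (vd c t) = 0)"

definition developable_on :: "real set \<Rightarrow> (real \<Rightarrow> real^3) \<Rightarrow> (real \<Rightarrow> real^3) \<Rightarrow> bool" where
  "developable_on I c q \<longleftrightarrow> (\<forall>t\<in>I. dist_param c q t = 0)"

definition type_M1_minus_on :: "real set \<Rightarrow> (real \<Rightarrow> real^3) \<Rightarrow> bool" where
  "type_M1_minus_on I q \<longleftrightarrow> (\<forall>t\<in>I. timelike (q t) \<and> spacelike (central_normal q t))"

definition type_M1_plus_on :: "real set \<Rightarrow> (real \<Rightarrow> real^3) \<Rightarrow> bool" where
  "type_M1_plus_on I q \<longleftrightarrow> (\<forall>t\<in>I. spacelike (q t) \<and> spacelike (central_normal q t))"

text \<open>phi* = c* + v q* is a Mannheim offset of phi = c + v q (rulings corresponding via the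
  common parameter s): h* = a.\<close>
definition mannheim_offset_on :: "real set \<Rightarrow> (real \<Rightarrow> real^3) \<Rightarrow> (real \<Rightarrow> real^3) \<Rightarrow> bool" where
  "mannheim_offset_on I qs q \<longleftrightarrow> (\<forall>t\<in>I. central_normal qs t = asym_normal q t)"

end

theory Submission
  imports Defs
begin

text \<open>Along the striction curve of \<open>\<phi>\<close> one has \<open>c' = q\<close> and the Frenet equations
  \<open>q' = m h\<close>, \<open>h' = m (q + \<kappa> a)\<close>, \<open>a' = - m \<kappa> h\<close> with \<open>m = ds\<^sub>1/ds\<close>, so the candidate
  striction curve \<open>c + R a\<close> has tangent \<open>U = q - K h\<close> with \<open>K = R m \<kappa>\<close> (below: \<open>offset_tangent\<close>
  and \<open>tilt\<close>). If \<open>\<phi>\<^sup>*\<close> is a Mannheim offset, then \<open>q\<^sup>*'\<close> is parallel to \<open>a\<close>, so \<open>q\<^sup>*\<close> is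
  orthogonal to \<open>a\<close>, and developability says that \<open>q\<^sup>*\<close> is also orthogonal to \<open>U \<times> a = h - K q\<close>;
  differentiating the latter relation gives the Riccati equation \<open>K' = m (1 - K\<^sup>2)\<close>, which is the
  stated equation for \<open>\<kappa>'\<close> in disguise. Conversely, the Riccati equation gives
  \<open>U' = - K m U - K m \<kappa> a\<close>, so the normalisation of \<open>U\<close> has derivative parallel to \<open>a\<close> and is
  the ruling of a developable Mannheim offset; it has the causal character of \<open>U\<close>, which cannot
  change on an interval since \<open>\<langle>U, U\<rangle> = K\<^sup>2 - 1 \<noteq> 0\<close>.\<close>

lemma vec3_eq_iff: "(x::real^3) = y \<longleftrightarrow> x$1 = y$1 \<and> x$2 = y$2 \<and> x$3 = y$3"
  by (simp add: vec_eq_iff forall_3)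

lemma lcross_nth [simp]:
  "lcross x y $ 1 = x$2 * y$3 - x$3 * y$2"
  "lcross x y $ 2 = x$1 * y$3 - x$3 * y$1"
  "lcross x y $ 3 = x$2 * y$1 - x$1 * y$2"
  by (simp_all add: lcross_def)

lemma mink_commute: "mink x y = mink y x"
  by (simp add: mink_def algebra_simps)

lemma mink_scaleR [simp]: "mink (r *\<^sub>R x) y = r * mink x y" "mink x (r *\<^sub>R y) = r * mink x y"
  and mink_add [simp]: "mink (x + y) z = mink x z + mink y z" "mink z (x + y) = mink z x + mink z y"
  and mink_diff [simp]: "mink (x - y) z = mink x z - mink y z" "mink z (x - y) = mink z x - mink z y"
  and mink_minus [simp]: "mink (- x) z = - mink x z" "mink z (- x) = - mink z x"
  by (simp_all add: mink_def algebra_simps)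

lemma lcross_scaleR [simp]: "lcross (r *\<^sub>R x) y = r *\<^sub>R lcross x y" "lcross x (r *\<^sub>R y) = r *\<^sub>R lcross x y"
  and lcross_add [simp]: "lcross (x + y) z = lcross x z + lcross y z" "lcross z (x + y) = lcross z x + lcross z y"
  and lcross_self [simp]: "lcross x x = 0"
  by (simp_all add: vec3_eq_iff algebra_simps)

lemma lcross_commute: "lcross x y = - lcross y x"
  by (simp add: vec3_eq_iff)

lemma mink_lcross_orthogonal [simp]: "mink (lcross x y) x = 0" "mink (lcross x y) y = 0"
  by (simp_all add: mink_def algebra_simps)

lemma lcross_lcross: "lcross (lcross x y) z = mink y z *\<^sub>R x - mink x z *\<^sub>R y"
  by (simp add: vec3_eq_iff mink_def algebra_simps)

lemma mink_lcross_self: "mink (lcross x y) (lcross x y) = (mink x y)\<^sup>2 - mink x x * mink y y"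
  by (simp add: mink_def power2_eq_square algebra_simps)

lemma det3_as_mink_lcross:
  "det3 x y z = mink (lcross y x) z" "det3 x y z = mink (lcross x z) y" "det3 x y z = mink (lcross z y) x"
  by (simp_all add: det3_def mink_def algebra_simps)

lemma det3_scaleR: "det3 x (r *\<^sub>R y) z = r * det3 x y z" "det3 x y (r *\<^sub>R z) = r * det3 x y z"
  by (simp_all add: det3_def algebra_simps)

lemma det3_same: "det3 x x z = 0"
  by (simp add: det3_def algebra_simps)

lemma det3_cramer: "det3 x y z *\<^sub>R v = det3 v y z *\<^sub>R x + det3 x v z *\<^sub>R y + det3 x y v *\<^sub>R z"
  by (simp add: vec3_eq_iff det3_def algebra_simps)

lemma pseudo_orthonormal_expansion:
  assumes qq: "mink q q = -1" and hh: "mink h h = 1" and qh: "mink q h = 0"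
  shows "v = (- mink q v) *\<^sub>R q + mink h v *\<^sub>R h + mink (lcross h q) v *\<^sub>R lcross h q"
proof -
  define a where "a = lcross h q"
  have hq: "mink h q = 0" using qh mink_commute[of h q] by simp
  have "det3 q h a = mink a a"
    by (simp add: det3_as_mink_lcross(1) a_def)
  also have "\<dots> = 1"
    using qq hh hq by (simp add: a_def mink_lcross_self)
  finally have "det3 q h a = 1" .
  moreover have "det3 v h a = - mink q v"
    using hh qh hq by (simp add: det3_as_mink_lcross(3) a_def lcross_lcross)
  moreover have "det3 q v a = mink h v"
    using qq qh hq by (simp add: det3_as_mink_lcross(2) lcross_commute[of q] a_def lcross_lcross)
  moreover have "det3 q h v = mink a v"
    by (simp add: det3_as_mink_lcross(1) a_def)
  ultimately show ?thesis
    using det3_cramer[of q h a v] by (simp add: a_def)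
qed

lemma bounded_bilinear_mink: "bounded_bilinear mink"
  unfolding bilinear_conv_bounded_bilinear[symmetric]
  by (auto simp: bilinear_def linear_iff)

lemma bounded_bilinear_lcross: "bounded_bilinear lcross"
  unfolding bilinear_conv_bounded_bilinear[symmetric]
  by (auto simp: bilinear_def linear_iff)

lemma mink_has_derivative:
  assumes "(f has_vector_derivative f') (at x)" "(g has_vector_derivative g') (at x)"
  shows "((\<lambda>t. mink (f t) (g t)) has_real_derivative mink (f x) g' + mink f' (g x)) (at x)"
  using bounded_bilinear.has_vector_derivative[OF bounded_bilinear_mink assms]
  by (simp add: has_real_derivative_iff_has_vector_derivative)

lemma lcross_has_derivative:
  assumes "(f has_vector_derivative f') (at x)" "(g has_vector_derivative g') (at x)"
  shows "((\<lambda>t. lcross (f t) (g t)) has_vector_derivative lcross (f x) g' + lcross f' (g x)) (at x)"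
  by (rule bounded_bilinear.has_vector_derivative[OF bounded_bilinear_lcross assms])

lemma has_real_derivative_constant_on_open:
  assumes "open I" "s \<in> I" "\<And>t. t \<in> I \<Longrightarrow> g t = k" "(g has_real_derivative d) (at s)"
  shows "d = 0"
proof -
  have "eventually (\<lambda>t. g t = k) (nhds s)"
    using eventually_nhds_in_open[OF assms(1,2)] by (rule eventually_mono) (use assms(3) in auto)
  then have "((\<lambda>t. k) has_real_derivative d) (at s)"
    using DERIV_cong_ev[OF refl _ refl, of g "\<lambda>t. k"] assms(4) by simp
  then show ?thesis
    using DERIV_const DERIV_unique by blast
qed

lemma mink_orthogonal_derivative_of_unit:
  assumes I: "open I" "t \<in> I" and unit: "\<And>y. y \<in> I \<Longrightarrow> \<bar>mink (f y) (f y)\<bar> = 1"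
    and f': "(f has_vector_derivative f') (at t)"
  shows "mink (f t) f' = 0"
proof -
  have "((\<lambda>y. mink (f y) (f y) * mink (f y) (f y)) has_real_derivative
      4 * mink (f t) (f t) * mink (f t) f') (at t)"
    by (rule DERIV_cong[OF DERIV_mult[OF mink_has_derivative[OF f' f'] mink_has_derivative[OF f' f']]])
      (simp add: mink_commute[of f'] algebra_simps)
  moreover have "mink (f y) (f y) * mink (f y) (f y) = 1" if "y \<in> I" for y
    using unit[OF that] abs_mult_self_eq[of "mink (f y) (f y)"] by simp
  ultimately have "4 * mink (f t) (f t) * mink (f t) f' = 0"
    by (rule has_real_derivative_constant_on_open[OF I, rotated])
  moreover have "mink (f t) (f t) \<noteq> 0"
    using unit[OF I(2)] by auto
  ultimately show ?thesis
    by simp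
qed

lemma mnorm_has_derivative:
  assumes f': "(f has_vector_derivative f') (at t)" and nonnull: "mink (f t) (f t) \<noteq> 0"
  shows "((\<lambda>t. mnorm (f t)) has_real_derivative
           sgn (mink (f t) (f t)) * mink (f t) f' / mnorm (f t)) (at t)"
proof -
  define g where "g t = mink (f t) (f t)" for t
  have g': "(g has_real_derivative 2 * mink (f t) f') (at t)"
    unfolding g_def using mink_has_derivative[OF f' f'] by (simp add: mink_commute[of f'])
  have "(\<lambda>t. mnorm (f t)) = (\<lambda>t. sqrt (sqrt ((g t)\<^sup>2)))"
    by (simp add: mnorm_def g_def fun_eq_iff)
  moreover have "((\<lambda>t. sqrt (sqrt ((g t)\<^sup>2))) has_real_derivative
      inverse (sqrt (sqrt ((g t)\<^sup>2))) / 2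
        * (inverse (sqrt ((g t)\<^sup>2)) / 2 * (2 * g t * (2 * mink (f t) f')))) (at t)"
    using nonnull unfolding g_def[symmetric]
    by (intro DERIV_chain2[OF DERIV_real_sqrt] DERIV_chain2[OF DERIV_real_sqrt])
      (auto intro: DERIV_cong[OF DERIV_power[OF g', of 2]])
  moreover have "inverse (sqrt (sqrt ((g t)\<^sup>2))) / 2
        * (inverse (sqrt ((g t)\<^sup>2)) / 2 * (2 * g t * (2 * mink (f t) f')))
      = sgn (g t) * mink (f t) f' / mnorm (f t)"
    using nonnull unfolding g_def[symmetric]
    by (simp add: mnorm_def g_def[symmetric] field_simps sgn_if abs_if)
  ultimately show ?thesis
    by (simp add: g_def)
qed

lemma mnorm_pos: "mink x x \<noteq> 0 \<Longrightarrow> 0 < mnorm x"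
  by (simp add: mnorm_def)

lemma mink_normalized_self:
  "mink x x \<noteq> 0 \<Longrightarrow> mink ((r / mnorm x) *\<^sub>R x) ((r / mnorm x) *\<^sub>R x) = r\<^sup>2 * sgn (mink x x)"
  by (simp add: mnorm_def real_sgn_eq power2_eq_square real_sqrt_mult_self)

lemma normalized_has_derivative:
  assumes U': "(U has_vector_derivative \<mu> *\<^sub>R U t + V) (at t)"
    and UV: "mink (U t) V = 0" and nonnull: "mink (U t) (U t) \<noteq> 0"
  shows "((\<lambda>t. (r / mnorm (U t)) *\<^sub>R U t) has_vector_derivative (r / mnorm (U t)) *\<^sub>R V) (at t)"
proof -
  define N where "N = mnorm (U t)"
  have N_pos: "0 < N"
    unfolding N_def using nonnull by (rule mnorm_pos)
  have "sgn (mink (U t) (U t)) * mink (U t) (U t) = N * N"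
    by (simp add: N_def mnorm_def sgn_if abs_if)
  then have "sgn (mink (U t) (U t)) * mink (U t) (\<mu> *\<^sub>R U t + V) / N = \<mu> * N"
    using N_pos UV by (simp add: field_simps)
  then have "((\<lambda>t. mnorm (U t)) has_real_derivative \<mu> * N) (at t)"
    using mnorm_has_derivative[OF U' nonnull] by (simp add: N_def)
  then have "((\<lambda>t. r / mnorm (U t)) has_real_derivative - (r / N * \<mu>)) (at t)"
    using N_pos by (auto intro: DERIV_cong[OF DERIV_divide[OF DERIV_const]] simp: N_def)
  from has_vector_derivative_scaleR[OF this U']
  show ?thesis
    by (rule has_vector_derivative_eq_rhs) (simp add: N_def algebra_simps)
qed

lemma connected_nonzero_sign_cases:
  fixes g :: "'a::topological_space \<Rightarrow> real"
  assumes "connected S" "continuous_on S g" "\<And>x. x \<in> S \<Longrightarrow> g x \<noteq> 0"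
  shows "(\<forall>x\<in>S. 0 < g x) \<or> (\<forall>x\<in>S. g x < 0)"
proof (rule ccontr)
  assume "\<not> ?thesis"
  then obtain x y where "x \<in> S" "y \<in> S" "g x < 0" "0 < g y"
    using assms(3) by (meson linorder_neqE_linordered_idom)
  moreover have "connected (g ` S)"
    by (rule connected_continuous_image[OF assms(2,1)])
  ultimately have "0 \<in> g ` S"
    unfolding connected_iff_interval by (meson image_eqI less_imp_le)
  then show False
    using assms(3) by force
qed

lemma ruled_surface_on_has_vector_derivative:
  assumes "ruled_surface_on I c q" "t \<in> I"
  shows "(c has_vector_derivative vd c t) (at t)" and "(q has_vector_derivative vd q t) (at t)"
  using assms unfolding ruled_surface_on_def vd_def by (simp_all add: vector_derivative_works[symmetric])

lemma vd_eq_mnorm_scaleR_central_normal: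
  "mink (vd q t) (vd q t) \<noteq> 0 \<Longrightarrow> vd q t = mnorm (vd q t) *\<^sub>R central_normal q t"
  using mnorm_pos[of "vd q t"] by (simp add: central_normal_def)

lemma central_normal_eqI:
  assumes "vd q t = r *\<^sub>R v" "0 < r" "mink v v = 1"
  shows "central_normal q t = v"
proof -
  have "mnorm (vd q t) = r"
    using assms by (simp add: mnorm_def real_sqrt_mult abs_mult)
  then show ?thesis
    using assms by (simp add: central_normal_def)
qed

lemma mink_central_normal_self:
  "mink (vd q t) (vd q t) \<noteq> 0 \<Longrightarrow>
     mink (central_normal q t) (central_normal q t) = sgn (mink (vd q t) (vd q t))"
  by (simp add: central_normal_def mnorm_def sgn_if abs_if)

locale developable_M1_minus =
  fixes I :: "real set" and c q :: "real \<Rightarrow> real^3" and s1 \<kappa> :: "real \<Rightarrow> real"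
  assumes open_I: "open I"
    and surf: "ruled_surface_on I c q"
    and arclen: "\<forall>s\<in>I. \<bar>mink (vd c s) (vd c s)\<bar> = 1"
    and orient: "\<forall>s\<in>I. mink (vd c s) (q s) < 0"
    and regular: "\<forall>s\<in>I. vd q differentiable (at s) \<and> vd (vd q) differentiable (at s)"
    and type_phi: "type_M1_minus_on I q"
    and dev: "developable_on I c q"
    and s1: "\<forall>s\<in>I. (s1 has_real_derivative mnorm (vd q s)) (at s)"
    and kappa: "\<forall>s\<in>I. vd (central_normal q) s
                  = deriv s1 s *\<^sub>R (q s + \<kappa> s *\<^sub>R asym_normal q s)"
begin

abbreviation h :: "real \<Rightarrow> real^3" where "h \<equiv> central_normal q"
abbreviation a :: "real \<Rightarrow> real^3" where "a \<equiv> asym_normal q"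
abbreviation m :: "real \<Rightarrow> real" where "m t \<equiv> mnorm (vd q t)"

lemma c_has_derivative: "t \<in> I \<Longrightarrow> (c has_vector_derivative vd c t) (at t)"
  and q_has_derivative: "t \<in> I \<Longrightarrow> (q has_vector_derivative vd q t) (at t)"
  using ruled_surface_on_has_vector_derivative[OF surf] by blast+

lemma vd_q_has_derivative: "t \<in> I \<Longrightarrow> (vd q has_vector_derivative vd (vd q) t) (at t)"
  using regular unfolding vd_def by (simp add: vector_derivative_works[symmetric])

lemma q_unit: "t \<in> I \<Longrightarrow> mink (q t) (q t) = -1"
  using surf type_phi unfolding ruled_surface_on_def type_M1_minus_on_def timelike_def by force

lemma vd_q_nonnull: "t \<in> I \<Longrightarrow> mink (vd q t) (vd q t) \<noteq> 0"
  using surf unfolding ruled_surface_on_def by blast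

lemma m_pos: "t \<in> I \<Longrightarrow> 0 < m t"
  using mnorm_pos vd_q_nonnull by blast

lemma q_frenet: "t \<in> I \<Longrightarrow> (q has_vector_derivative m t *\<^sub>R h t) (at t)"
  using q_has_derivative vd_eq_mnorm_scaleR_central_normal[OF vd_q_nonnull] by metis

lemma h_unit: "t \<in> I \<Longrightarrow> mink (h t) (h t) = 1"
  using mink_central_normal_self[OF vd_q_nonnull] type_phi
  unfolding type_M1_minus_on_def spacelike_def by (fastforce simp: sgn_if split: if_splits)

lemma q_h_orth: "t \<in> I \<Longrightarrow> mink (q t) (h t) = 0"
proof -
  assume t: "t \<in> I"
  have "mink (q t) (vd q t) = 0"
    by (rule mink_orthogonal_derivative_of_unit[OF open_I t _ q_has_derivative[OF t]]) (simp add: q_unit)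
  then show ?thesis
    by (simp add: central_normal_def)
qed

lemma a_eq: "a t = lcross (h t) (q t)"
  by (simp add: asym_normal_def central_normal_def)

lemma q_a_orth: "mink (q t) (a t) = 0"
  and h_a_orth: "mink (h t) (a t) = 0"
  by (simp_all add: a_eq mink_commute[of _ "lcross _ _"])

lemma vd_q_a_orth: "mink (vd q t) (a t) = 0"
  by (simp add: asym_normal_def mink_commute[of "vd q t"])

lemma a_unit: "t \<in> I \<Longrightarrow> mink (a t) (a t) = 1"
proof -
  assume t: "t \<in> I"
  have "mink (a t) (a t) = (mink (h t) (q t))\<^sup>2 - mink (h t) (h t) * mink (q t) (q t)"
    by (simp add: a_eq mink_lcross_self)
  also have "\<dots> = 1"
    using q_unit[OF t] h_unit[OF t] q_h_orth[OF t] mink_commute[of "h t" "q t"] by simp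
  finally show ?thesis .
qed

lemma frame_expansion:
  assumes t: "t \<in> I"
  shows "v = (- mink (q t) v) *\<^sub>R q t + mink (h t) v *\<^sub>R h t + mink (a t) v *\<^sub>R a t"
  unfolding a_eq by (rule pseudo_orthonormal_expansion[OF q_unit[OF t] h_unit[OF t] q_h_orth[OF t]])

lemma vd_c_eq:
  assumes t: "t \<in> I"
  shows "vd c t = q t"
proof -
  define v where "v = vd c t"
  have "mink (vd q t) v = 0"
    using surf t unfolding ruled_surface_on_def v_def by blast
  then have hv: "mink (h t) v = 0"
    by (simp add: central_normal_def)
  have "det3 v (q t) (vd q t) = 0"
    using dev surf t unfolding developable_on_def dist_param_def ruled_surface_on_def v_def by auto
  then have av: "mink (a t) v = 0"
    by (simp add: asym_normal_def det3_as_mink_lcross(3))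
  define x where "x = mink (q t) v"
  have v_eq: "v = (- x) *\<^sub>R q t"
    using frame_expansion[OF t, of v] hv av by (simp add: x_def)
  then have "mink v v = - x\<^sup>2"
    using q_unit[OF t] by (simp add: power2_eq_square)
  moreover have "\<bar>mink v v\<bar> = 1"
    using arclen t by (simp add: v_def)
  moreover have "x < 0"
    using orient t by (simp add: x_def v_def mink_commute[of "q t"])
  ultimately have "x = -1"
    by (auto simp: power2_eq_1_iff)
  then show ?thesis
    using v_eq by (simp add: v_def)
qed

lemma deriv_s1: "t \<in> I \<Longrightarrow> deriv s1 t = m t"
  using s1 DERIV_imp_deriv by blast

lemma m_has_derivative: "t \<in> I \<Longrightarrow> ((\<lambda>t. m t) has_real_derivative deriv (deriv s1) t) (at t)"
proof -
  assume t: "t \<in> I"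
  obtain D where m': "((\<lambda>t. m t) has_real_derivative D) (at t)"
    using mnorm_has_derivative[OF vd_q_has_derivative[OF t] vd_q_nonnull[OF t]] by blast
  then have "(deriv s1 has_real_derivative D) (at t)"
    by (rule has_field_derivative_transform_within_open[OF _ open_I t]) (simp add: deriv_s1)
  then show ?thesis
    using m' DERIV_imp_deriv by metis
qed

lemma h_has_derivative_raw:
  assumes t: "t \<in> I"
  shows "(h has_vector_derivative
           inverse (m t) *\<^sub>R vd (vd q) t - (deriv (deriv s1) t / (m t)\<^sup>2) *\<^sub>R vd q t) (at t)"
proof -
  have "m t \<noteq> 0"
    using m_pos[OF t] by simp
  then have "((\<lambda>t. inverse (m t) *\<^sub>R vd q t) has_vector_derivative
      inverse (m t) *\<^sub>R vd (vd q) t - (deriv (deriv s1) t / (m t)\<^sup>2) *\<^sub>R vd q t) (at t)"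
    by (intro has_vector_derivative_eq_rhs[OF has_vector_derivative_scaleR[OF
          DERIV_inverse_fun[OF m_has_derivative[OF t]] vd_q_has_derivative[OF t]]])
      (simp_all add: divide_inverse power2_eq_square)
  moreover have "h = (\<lambda>t. inverse (m t) *\<^sub>R vd q t)"
    by (simp add: fun_eq_iff central_normal_def divide_inverse)
  ultimately show ?thesis
    by simp
qed

lemma h_frenet: "t \<in> I \<Longrightarrow> (h has_vector_derivative m t *\<^sub>R (q t + \<kappa> t *\<^sub>R a t)) (at t)"
  using h_has_derivative_raw vector_derivative_at[OF h_has_derivative_raw] kappa deriv_s1
  by (metis vd_def)

lemma a_frenet: "t \<in> I \<Longrightarrow> (a has_vector_derivative (- (m t * \<kappa> t)) *\<^sub>R h t) (at t)"
proof -
  assume t: "t \<in> I"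
  have "a = (\<lambda>t. lcross (h t) (q t))"
    by (simp add: fun_eq_iff a_eq)
  then have "(a has_vector_derivative
      lcross (h t) (vd q t) + lcross (m t *\<^sub>R (q t + \<kappa> t *\<^sub>R a t)) (q t)) (at t)"
    using lcross_has_derivative[OF h_frenet[OF t] q_has_derivative[OF t]] by simp
  moreover have "lcross (h t) (vd q t) = 0"
    by (simp add: central_normal_def)
  moreover have "lcross (a t) (q t) = - h t"
    using q_unit[OF t] q_h_orth[OF t] by (simp add: a_eq lcross_lcross mink_commute[of "h t"])
  ultimately show ?thesis
    by simp
qed

text \<open>The hypothesis on \<open>\<kappa>\<close> determines it only implicitly; this closed form shows that it is
  differentiable.\<close>

lemma kappa_eq: "t \<in> I \<Longrightarrow> \<kappa> t = mink (vd (vd q) t) (a t) / (m t)\<^sup>2"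
proof -
  assume t: "t \<in> I"
  have "m t *\<^sub>R (q t + \<kappa> t *\<^sub>R a t)
      = inverse (m t) *\<^sub>R vd (vd q) t - (deriv (deriv s1) t / (m t)\<^sup>2) *\<^sub>R vd q t"
    using h_frenet[OF t] h_has_derivative_raw[OF t] by (rule vector_derivative_unique_at)
  then have "mink (m t *\<^sub>R (q t + \<kappa> t *\<^sub>R a t)) (a t)
      = mink (inverse (m t) *\<^sub>R vd (vd q) t - (deriv (deriv s1) t / (m t)\<^sup>2) *\<^sub>R vd q t) (a t)"
    by (rule arg_cong)
  then have "m t * \<kappa> t = inverse (m t) * mink (vd (vd q) t) (a t)"
    using q_a_orth vd_q_a_orth a_unit[OF t] by simp
  then show ?thesis
    using m_pos[OF t] by (simp add: field_simps power2_eq_square)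
qed

lemma kappa_has_derivative: "t \<in> I \<Longrightarrow> (\<kappa> has_real_derivative deriv \<kappa> t) (at t)"
proof -
  assume t: "t \<in> I"
  define F where "F t = mink (vd (vd q) t) (a t) / (m t)\<^sup>2" for t
  have "(vd (vd q) has_vector_derivative vector_derivative (vd (vd q)) (at t)) (at t)"
    using regular t vector_derivative_works by blast
  then have "(\<lambda>t. mink (vd (vd q) t) (a t)) differentiable (at t)"
    using mink_has_derivative[OF _ a_frenet[OF t]] real_differentiable_def by blast
  moreover have "(\<lambda>t. m t) differentiable (at t)"
    using m_has_derivative[OF t] real_differentiable_def by blast
  ultimately have "F differentiable (at t)"
    unfolding F_def using m_pos[OF t] by simp
  then have "(\<kappa> has_real_derivative deriv F t) (at t)"
    unfolding DERIV_deriv_iff_real_differentiable[symmetric]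
    by (rule has_field_derivative_transform_within_open[OF _ open_I t]) (simp add: F_def kappa_eq)
  then show ?thesis
    using DERIV_imp_deriv by metis
qed

end

locale mannheim_offset_setting = developable_M1_minus +
  fixes R :: real
  assumes R_nonzero: "R \<noteq> 0"
begin

definition tilt :: "real \<Rightarrow> real" where
  "tilt t = R * m t * \<kappa> t"

definition offset_tangent :: "real \<Rightarrow> real^3" where
  "offset_tangent t = q t - tilt t *\<^sub>R h t"

definition offset_normal :: "real \<Rightarrow> real^3" where
  "offset_normal t = h t - tilt t *\<^sub>R q t"

text \<open>The factor \<open>- sgn R\<close> makes the derivative of \<open>offset_ruling\<close> a positive multiple of
  \<open>a\<close> (see \<open>offset_speed_pos\<close>), so that its central normal is \<open>a\<close> and not \<open>- a\<close>.\<close>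

definition offset_ruling :: "real \<Rightarrow> real^3" where
  "offset_ruling t = (- sgn R / mnorm (offset_tangent t)) *\<^sub>R offset_tangent t"

lemma tilt_has_derivative: "t \<in> I \<Longrightarrow> (tilt has_real_derivative deriv tilt t) (at t)"
  and deriv_tilt: "t \<in> I \<Longrightarrow> deriv tilt t = R * (deriv (deriv s1) t * \<kappa> t + m t * deriv \<kappa> t)"
proof -
  assume t: "t \<in> I"
  have "(tilt has_real_derivative R * (deriv (deriv s1) t * \<kappa> t + m t * deriv \<kappa> t)) (at t)"
    unfolding tilt_def[abs_def]
    by (auto intro!: derivative_eq_intros m_has_derivative[OF t] kappa_has_derivative[OF t]
        simp: algebra_simps)
  then show "(tilt has_real_derivative deriv tilt t) (at t)"
    and "deriv tilt t = R * (deriv (deriv s1) t * \<kappa> t + m t * deriv \<kappa> t)"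
    using DERIV_imp_deriv by (metis, blast)
qed

lemma kappa_ode_iff_riccati:
  assumes t: "t \<in> I"
  shows "deriv \<kappa> t = - (1 / R) * (R\<^sup>2 * (\<kappa> t)\<^sup>2 * (deriv s1 t)\<^sup>2 - 1)
                      - (1 / deriv s1 t) * deriv (deriv s1) t * \<kappa> t
         \<longleftrightarrow> deriv tilt t = m t * (1 - (tilt t)\<^sup>2)"
  using deriv_tilt[OF t] deriv_s1[OF t] m_pos[OF t] R_nonzero
  by (auto simp: tilt_def field_simps power2_eq_square)

lemma offset_striction_has_derivative:
  assumes t: "t \<in> I"
  shows "((\<lambda>s. c s + R *\<^sub>R a s) has_vector_derivative offset_tangent t) (at t)"
  using has_vector_derivative_add[OF c_has_derivative[OF t]
      has_vector_derivative_scaleR[OF DERIV_const a_frenet[OF t]]]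
  by (rule has_vector_derivative_eq_rhs) (simp add: vd_c_eq[OF t] offset_tangent_def tilt_def)

lemma offset_tangent_has_derivative:
  assumes t: "t \<in> I"
  shows "(offset_tangent has_vector_derivative
           (m t - deriv tilt t) *\<^sub>R h t - (tilt t * m t) *\<^sub>R (q t + \<kappa> t *\<^sub>R a t)) (at t)"
  unfolding offset_tangent_def[abs_def]
  using has_vector_derivative_diff[OF q_frenet[OF t]
      has_vector_derivative_scaleR[OF tilt_has_derivative[OF t] h_frenet[OF t]]]
  by (rule has_vector_derivative_eq_rhs) (simp add: algebra_simps)

lemma offset_normal_has_derivative:
  assumes t: "t \<in> I"
  shows "(offset_normal has_vector_derivative
           m t *\<^sub>R (q t + \<kappa> t *\<^sub>R a t) - deriv tilt t *\<^sub>R q t - (tilt t * m t) *\<^sub>R h t) (at t)"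
  unfolding offset_normal_def[abs_def]
  using has_vector_derivative_diff[OF h_frenet[OF t]
      has_vector_derivative_scaleR[OF tilt_has_derivative[OF t] q_frenet[OF t]]]
  by (rule has_vector_derivative_eq_rhs) (simp add: algebra_simps)

lemma offset_tangent_a_orth: "mink (offset_tangent t) (a t) = 0"
  and offset_normal_a_orth: "mink (offset_normal t) (a t) = 0"
  by (simp_all add: offset_tangent_def offset_normal_def q_a_orth h_a_orth)

lemma lcross_offset_tangent_a: "t \<in> I \<Longrightarrow> lcross (offset_tangent t) (a t) = offset_normal t"
  using q_unit h_unit q_h_orth
  by (simp add: offset_tangent_def offset_normal_def a_eq lcross_commute[of _ "lcross _ _"]
      lcross_lcross mink_commute[of "h _" "q _"])

lemma offset_tangent_square: "t \<in> I \<Longrightarrow> mink (offset_tangent t) (offset_tangent t) = (tilt t)\<^sup>2 - 1"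
  using q_unit h_unit q_h_orth
  by (simp add: offset_tangent_def mink_commute[of "h _" "q _"] power2_eq_square)

lemma vd_offset_striction: "t \<in> I \<Longrightarrow> vd (\<lambda>s. c s + R *\<^sub>R a s) t = offset_tangent t"
  unfolding vd_def using offset_striction_has_derivative by (rule vector_derivative_at)

context
  fixes qs :: "real \<Rightarrow> real^3"
  assumes offset_surf: "ruled_surface_on I (\<lambda>s. c s + R *\<^sub>R a s) qs"
    and offset_dev: "developable_on I (\<lambda>s. c s + R *\<^sub>R a s) qs"
    and mannheim: "mannheim_offset_on I qs q"
begin

lemma vd_mannheim_ruling: "t \<in> I \<Longrightarrow> vd qs t = mnorm (vd qs t) *\<^sub>R a t"
  and mnorm_vd_mannheim_ruling_pos: "t \<in> I \<Longrightarrow> 0 < mnorm (vd qs t)"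
  using offset_surf mannheim vd_eq_mnorm_scaleR_central_normal[of qs t] mnorm_pos[of "vd qs t"]
  unfolding ruled_surface_on_def mannheim_offset_on_def by auto

lemma mannheim_ruling_a_orth:
  assumes t: "t \<in> I"
  shows "mink (qs t) (a t) = 0"
proof -
  have "mink (qs t) (vd qs t) = 0"
    using mink_orthogonal_derivative_of_unit[OF open_I t _
        ruled_surface_on_has_vector_derivative(2)[OF offset_surf t]] offset_surf
    unfolding ruled_surface_on_def by blast
  then have "mnorm (vd qs t) * mink (qs t) (a t) = 0"
    using vd_mannheim_ruling[OF t] by (metis mink_scaleR(2))
  then show ?thesis
    using mnorm_vd_mannheim_ruling_pos[OF t] by simp
qed

lemma mannheim_ruling_normal_orth:
  assumes t: "t \<in> I"
  shows "mink (qs t) (offset_normal t) = 0"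
proof -
  have "det3 (offset_tangent t) (qs t) (vd qs t) = 0"
    using offset_dev offset_surf t vd_offset_striction[OF t]
    unfolding developable_on_def dist_param_def ruled_surface_on_def by auto
  then have "mnorm (vd qs t) * det3 (offset_tangent t) (qs t) (a t) = 0"
    using vd_mannheim_ruling[OF t] by (metis det3_scaleR(2))
  then have "det3 (offset_tangent t) (qs t) (a t) = 0"
    using mnorm_vd_mannheim_ruling_pos[OF t] by simp
  then show ?thesis
    using lcross_offset_tangent_a[OF t] by (simp add: det3_as_mink_lcross(2) mink_commute[of "qs t"])
qed

lemma mannheim_ruling_h_eq: "t \<in> I \<Longrightarrow> mink (qs t) (h t) = tilt t * mink (qs t) (q t)"
  using mannheim_ruling_normal_orth by (simp add: offset_normal_def)

lemma mannheim_ruling_q_nonzero: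
  assumes t: "t \<in> I"
  shows "mink (qs t) (q t) \<noteq> 0"
proof
  assume "mink (qs t) (q t) = 0"
  then have "qs t = 0"
    using frame_expansion[OF t, of "qs t"] mannheim_ruling_a_orth[OF t] mannheim_ruling_h_eq[OF t]
    by (simp add: mink_commute[of _ "qs t"])
  then show False
    using offset_surf t unfolding ruled_surface_on_def by (auto simp: mink_def)
qed

lemma mannheim_offset_riccati:
  assumes t: "t \<in> I"
  shows "deriv tilt t = m t * (1 - (tilt t)\<^sup>2)"
proof -
  have "mnorm (vd qs t) * mink (a t) (offset_normal t) = 0"
    using offset_normal_a_orth by (simp add: mink_commute[of "a t"])
  then have "mink (vd qs t) (offset_normal t) = 0"
    using vd_mannheim_ruling[OF t] by (metis mink_scaleR(1))
  moreover have "mink (qs t) (m t *\<^sub>R (q t + \<kappa> t *\<^sub>R a t) - deriv tilt t *\<^sub>R q t - (tilt t * m t) *\<^sub>R h t)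
      + mink (vd qs t) (offset_normal t) = 0"
    by (rule has_real_derivative_constant_on_open[OF open_I t mannheim_ruling_normal_orth
          mink_has_derivative[OF ruled_surface_on_has_vector_derivative(2)[OF offset_surf t]
            offset_normal_has_derivative[OF t]]])
  ultimately have "mink (qs t) (q t) * (m t * (1 - (tilt t)\<^sup>2) - deriv tilt t) = 0"
    using mannheim_ruling_a_orth[OF t] mannheim_ruling_h_eq[OF t]
    by (simp add: power2_eq_square algebra_simps)
  then show ?thesis
    using mannheim_ruling_q_nonzero[OF t] by simp
qed

end

definition offset_speed :: "real \<Rightarrow> real" where
  "offset_speed t = sgn R * R * (m t * \<kappa> t)\<^sup>2 / mnorm (offset_tangent t)"

lemma offset_ruling_has_derivative:
  assumes t: "t \<in> I" and riccati: "deriv tilt t = m t * (1 - (tilt t)\<^sup>2)"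
    and nonnull: "(tilt t)\<^sup>2 \<noteq> 1"
  shows "(offset_ruling has_vector_derivative offset_speed t *\<^sub>R a t) (at t)"
proof -
  have "(offset_tangent has_vector_derivative
      (- (tilt t * m t)) *\<^sub>R offset_tangent t + (- (tilt t * m t * \<kappa> t)) *\<^sub>R a t) (at t)"
    using offset_tangent_has_derivative[OF t]
    by (rule has_vector_derivative_eq_rhs)
      (simp add: riccati offset_tangent_def power2_eq_square algebra_simps)
  from normalized_has_derivative[OF this, of "- sgn R"]
  have "(offset_ruling has_vector_derivative
      (- sgn R / mnorm (offset_tangent t)) *\<^sub>R (- (tilt t * m t * \<kappa> t)) *\<^sub>R a t) (at t)"
    using offset_tangent_a_orth offset_tangent_square[OF t] nonnull
    by (simp add: offset_ruling_def[abs_def])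
  then show ?thesis
    by (rule has_vector_derivative_eq_rhs) (simp add: offset_speed_def tilt_def power2_eq_square)
qed

lemma offset_speed_pos:
  assumes t: "t \<in> I" and "\<kappa> t \<noteq> 0" "(tilt t)\<^sup>2 \<noteq> 1"
  shows "0 < offset_speed t"
proof -
  have "0 < sgn R * R"
    using R_nonzero by (simp add: sgn_if)
  moreover have "0 < (m t * \<kappa> t)\<^sup>2"
    using m_pos[OF t] assms(2) by simp
  moreover have "0 < mnorm (offset_tangent t)"
    using assms(3) by (intro mnorm_pos) (simp add: offset_tangent_square[OF t])
  ultimately show ?thesis
    by (simp add: offset_speed_def)
qed

lemma offset_ruling_square:
  assumes t: "t \<in> I" and nonnull: "(tilt t)\<^sup>2 \<noteq> 1"
  shows "mink (offset_ruling t) (offset_ruling t) = sgn ((tilt t)\<^sup>2 - 1)"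
proof -
  have "(sgn R)\<^sup>2 = 1"
    using R_nonzero by (simp add: sgn_if)
  then show ?thesis
    using mink_normalized_self[of "offset_tangent t" "- sgn R"] nonnull
    by (simp add: offset_ruling_def offset_tangent_square[OF t])
qed

lemma offset_ruling_causal_character:
  assumes "is_interval I" and nonnull: "\<forall>t\<in>I. (tilt t)\<^sup>2 \<noteq> 1"
  shows "(\<forall>t\<in>I. spacelike (offset_ruling t)) \<or> (\<forall>t\<in>I. timelike (offset_ruling t))"
proof -
  have "continuous_on I (\<lambda>t. (tilt t)\<^sup>2 - 1)"
    by (intro continuous_at_imp_continuous_on ballI continuous_intros DERIV_isCont[OF tilt_has_derivative])
  then have "(\<forall>t\<in>I. 0 < (tilt t)\<^sup>2 - 1) \<or> (\<forall>t\<in>I. (tilt t)\<^sup>2 - 1 < 0)"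
    by (rule connected_nonzero_sign_cases[OF is_interval_connected[OF assms(1)]]) (use nonnull in auto)
  then show ?thesis
    using offset_ruling_square nonnull unfolding spacelike_def timelike_def by auto
qed

lemma riccati_mannheim_offset:
  assumes interval: "is_interval I"
    and riccati: "\<forall>t\<in>I. deriv tilt t = m t * (1 - (tilt t)\<^sup>2)"
    and nondeg: "\<forall>t\<in>I. \<kappa> t \<noteq> 0 \<and> (tilt t)\<^sup>2 \<noteq> 1"
  shows "ruled_surface_on I (\<lambda>s. c s + R *\<^sub>R a s) offset_ruling
       \<and> developable_on I (\<lambda>s. c s + R *\<^sub>R a s) offset_ruling
       \<and> (type_M1_plus_on I offset_ruling \<or> type_M1_minus_on I offset_ruling)
       \<and> mannheim_offset_on I offset_ruling q"
proof -
  have ruling': "(offset_ruling has_vector_derivative offset_speed t *\<^sub>R a t) (at t)"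
    and speed_pos: "0 < offset_speed t" if "t \<in> I" for t
    using offset_ruling_has_derivative offset_speed_pos that riccati nondeg by blast+
  have vd_ruling: "vd offset_ruling t = offset_speed t *\<^sub>R a t" if "t \<in> I" for t
    unfolding vd_def using ruling'[OF that] by (rule vector_derivative_at)
  have normal: "central_normal offset_ruling t = a t" if "t \<in> I" for t
    using vd_ruling[OF that] speed_pos[OF that] a_unit[OF that] by (rule central_normal_eqI)
  have "ruled_surface_on I (\<lambda>s. c s + R *\<^sub>R a s) offset_ruling"
    unfolding ruled_surface_on_def
  proof (intro ballI conjI)
    fix t assume t: "t \<in> I"
    show "(\<lambda>s. c s + R *\<^sub>R a s) differentiable at t" "offset_ruling differentiable at t"
      using offset_striction_has_derivative[OF t] ruling'[OF t] by (auto intro: differentiableI_vector)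
    show "mink (vd (\<lambda>s. c s + R *\<^sub>R a s) t) (vd (\<lambda>s. c s + R *\<^sub>R a s) t) \<noteq> 0"
      using nondeg t by (simp add: vd_offset_striction[OF t] offset_tangent_square[OF t])
    show "\<bar>mink (offset_ruling t) (offset_ruling t)\<bar> = 1"
      using offset_ruling_square[OF t] nondeg t by (simp add: sgn_if)
    show "mink (vd offset_ruling t) (vd offset_ruling t) \<noteq> 0"
      using speed_pos[OF t] a_unit[OF t] by (simp add: vd_ruling[OF t])
    show "mink (vd offset_ruling t) (vd (\<lambda>s. c s + R *\<^sub>R a s) t) = 0"
      using offset_tangent_a_orth[of t]
      by (simp add: vd_ruling[OF t] vd_offset_striction[OF t] mink_commute[of "a t"])
  qed
  moreover have "det3 (offset_tangent t) (offset_ruling t) (vd offset_ruling t) = 0" for t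
    unfolding offset_ruling_def det3_scaleR det3_same by simp
  then have "developable_on I (\<lambda>s. c s + R *\<^sub>R a s) offset_ruling"
    unfolding developable_on_def dist_param_def by (simp add: vd_offset_striction)
  moreover have "type_M1_plus_on I offset_ruling \<or> type_M1_minus_on I offset_ruling"
    using offset_ruling_causal_character[OF interval] nondeg normal a_unit
    unfolding type_M1_plus_on_def type_M1_minus_on_def spacelike_def by auto
  ultimately show ?thesis
    using normal unfolding mannheim_offset_on_def by blast
qed

end

theorem theorem5p2:
  fixes I :: "real set"
    and c q :: "real \<Rightarrow> real^3"
    and s1 \<kappa> :: "real \<Rightarrow> real"
    and R :: real
  assumes I: "open I" "is_interval I"
    and surf: "ruled_surface_on I c q"
    and arclen: "\<forall>s\<in>I. \<bar>mink (vd c s) (vd c s)\<bar> = 1"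
    and orient: "\<forall>s\<in>I. mink (vd c s) (q s) < 0"
    and regular: "\<forall>s\<in>I. vd q differentiable (at s) \<and> vd (vd q) differentiable (at s)"
    and type_phi: "type_M1_minus_on I q"
    and dev: "developable_on I c q"
    and s1: "\<forall>s\<in>I. (s1 has_real_derivative mnorm (vd q s)) (at s)"
    and kappa: "\<forall>s\<in>I. vd (central_normal q) s
                  = deriv s1 s *\<^sub>R (q s + \<kappa> s *\<^sub>R asym_normal q s)"
    and R: "R \<noteq> 0"
    and nondeg: "\<forall>s\<in>I. \<kappa> s \<noteq> 0 \<and> R\<^sup>2 * (\<kappa> s)\<^sup>2 * (deriv s1 s)\<^sup>2 \<noteq> 1"
  shows "(\<exists>qs. ruled_surface_on I (\<lambda>s. c s + R *\<^sub>R asym_normal q s) qs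
              \<and> developable_on I (\<lambda>s. c s + R *\<^sub>R asym_normal q s) qs
              \<and> (type_M1_plus_on I qs \<or> type_M1_minus_on I qs)
              \<and> mannheim_offset_on I qs q)
         \<longleftrightarrow> (\<forall>s\<in>I. deriv \<kappa> s
                = - (1 / R) * (R\<^sup>2 * (\<kappa> s)\<^sup>2 * (deriv s1 s)\<^sup>2 - 1)
                  - (1 / deriv s1 s) * deriv (deriv s1) s * \<kappa> s)"
proof -
  interpret mannheim_offset_setting I c q s1 \<kappa> R
    by unfold_locales (use assms in auto)
  have "\<forall>s\<in>I. \<kappa> s \<noteq> 0 \<and> (tilt s)\<^sup>2 \<noteq> 1"
    using nondeg deriv_s1 by (simp add: tilt_def power_mult_distrib mult.commute mult.left_commute)
  then show ?thesis
    using mannheim_offset_riccati riccati_mannheim_offset[OF I(2)] kappa_ode_iff_riccati by blast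
qed

end
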